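(* Assume the standing setting below, fix $\nu_1,\nu_2,\nu_3\in(0,\infty)$, $0<\alpha_{\max}<\infty$, and let $\bar{\mathcal{R}}(c,s)=\mathcal{R}_c(c)+\nu_1\mathcal{R}_s(s)+\frac{\nu_2}{2}\|s-s_{\mathrm{mod}}\|^2+\frac{\nu_3}{2}\|P(s)-s_{\mathrm{calib}}\|^2$. Let $(c^\ast,s^\ast)$ be an $\bar{\mathcal{R}}$-minimizing solution (a minimizer of $\bar{\mathcal{R}}$ over $\{(c,s):B(c,s)=u^\ast\}$), $u^\ast=B(c^\ast,s^\ast)$, and $u_\delta\in Z$ with $\|u^\ast-u_\delta\|\le\delta$. For $0<\alpha\le\alpha_{\max}$ let $(c^\alpha,s^\alpha)$ be a minimizer of $J^{u_\delta}_{\alpha,\nu_1\alpha,\nu_2\alpha,\nu_3\alpha}$. Suppose that there exist $\kappa_1\in[0,1)$, $\kappa_2\ge0$ and $\xi^\ast=(\xi_{c^\ast},\xi_{s^\ast})\in\partial\bar{\mathcal{R}}(c^\ast,s^\ast)$ such that, for all $(\delta,\alpha)$ considered, $$\langle\xi^\ast,(c^\ast-c,s^\ast-s)\rangle\le\kappa_1D^{\xi^\ast}_{\bar{\mathcal{R}}}((c,s),(c^\ast,s^\ast))+\kappa_2\|B(c,s)-B(c^\ast,s^\ast)\|$$ for all $(c,s)$ with $J^{u_\delta}_{\alpha_{\max},\alpha_{\max}\nu_1,\alpha_{\max}\nu_2,\alpha_{\max}\nu_3}(c,s)\le M$, where $M>\alpha_{\max}(\bar{\mathcal{R}}(c^\ast,s^\ast)+\delta^2/\alpha)$.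 If $\alpha\sim\delta$ (i.e., $m\delta\le\alpha\le M'\delta$ for constants $0<m\le M'$), then as $\delta\to0$ $$D^{\xi^\ast}_{\bar{\mathcal{R}}}((c^\alpha,s^\alpha),(c^\ast,s^\ast))=\mathcal{O}(\delta),\qquad\|B(c^\alpha,s^\alpha)-B(c^\ast,s^\ast)\|=\mathcal{O}(\delta).$$
   Context: Standing setting: $X,Y,Z$ are Hilbert spaces; $X\times Y$ carries the inner product $\langle (c_1,s_1),(c_2,s_2)\rangle=\langle c_1,c_2\rangle_X+\langle s_1,s_2\rangle_Y$. $B:X\times Y\to Z$ is bilinear, satisfies $\|B(c,s)\|_Z\le C\|c\|_X\|s\|_Y$ for some $C>0$, and is sequentially weak-weak continuous. $Y_n\subset Y$ is a finite-dimensional subspace, $P:Y\to Y_n$ is linear and bounded, $s_{\mathrm{calib}}\in Y_n$, $s_{\mathrm{mod}}\in Y$. $\mathcal{R}_c:X\to[0,\infty)$ and $\mathcal{R}_s:Y\to[0,\infty)$ are proper, convex and weakly lower semi-continuous. For $u\in Z$: $J^{u}_{\alpha,\beta,\gamma,\mu}(c,s)=\frac12\|B(c,s)-u\|^2+\frac{\gamma}{2}\|s-s_{\mathrm{mod}}\|^2+\frac{\mu}{2}\|P(s)-s_{\mathrm{calib}}\|^2+\alpha\mathcal{R}_c(c)+\beta\mathcal{R}_s(s)$. For a convex functional $\mathcal{R}$ and $\xi\in\partial\mathcal{R}(x^\ast)$, the Bregman distance is $D^{\xi}_{\mathcal{R}}(x,x^\ast)=\mathcal{R}(x)-\mathcal{R}(x^\ast)-\langle\xi,x-x^\ast\rangle$.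 *)

theory Defs
  imports "HOL-Analysis.Analysis" "HOL-Library.Landau_Symbols"
begin

definition weak_conv :: "(nat \<Rightarrow> 'a::real_inner) \<Rightarrow> 'a \<Rightarrow> bool" where
  "weak_conv xs x \<longleftrightarrow> (\<forall>v. (\<lambda>n. inner (xs n) v) \<longlonglongrightarrow> inner x v)"

definition weakly_lsc :: "('a::real_inner \<Rightarrow> real) \<Rightarrow> bool" where
  "weakly_lsc f \<longleftrightarrow>
     (\<forall>xs x. weak_conv xs x \<longrightarrow> ereal (f x) \<le> liminf (\<lambda>n. ereal (f (xs n))))"

definition seq_weak_weak_cont :: "('x::real_inner \<Rightarrow> 'y::real_inner \<Rightarrow> 'z::real_inner) \<Rightarrow> bool" where
  "seq_weak_weak_cont B \<longleftrightarrow>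
     (\<forall>cs ss c s. weak_conv (\<lambda>n. (cs n, ss n)) (c, s)
        \<longrightarrow> weak_conv (\<lambda>n. B (cs n) (ss n)) (B c s))"

definition fin_dim_subspace :: "'a::real_vector set \<Rightarrow> bool" where
  "fin_dim_subspace V \<longleftrightarrow> subspace V \<and> (\<exists>S. finite S \<and> span S = V)"

definition Jfun ::
  "('x::real_inner \<Rightarrow> 'y::real_inner \<Rightarrow> 'z::real_inner) \<Rightarrow> ('y \<Rightarrow> 'y) \<Rightarrow> 'y \<Rightarrow> 'y
   \<Rightarrow> ('x \<Rightarrow> real) \<Rightarrow> ('y \<Rightarrow> real) \<Rightarrow> 'z \<Rightarrow> real \<Rightarrow> real \<Rightarrow> real \<Rightarrow> real
   \<Rightarrow> 'x \<Rightarrow> 'y \<Rightarrow> real" where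
  "Jfun B P smod scalib Rc Rs u \<alpha> \<beta> \<gamma> \<mu> c s =
     (1/2) * (norm (B c s - u))\<^sup>2 + (\<gamma>/2) * (norm (s - smod))\<^sup>2
     + (\<mu>/2) * (norm (P s - scalib))\<^sup>2 + \<alpha> * Rc c + \<beta> * Rs s"

definition Rbar ::
  "('y::real_inner \<Rightarrow> 'y) \<Rightarrow> 'y \<Rightarrow> 'y \<Rightarrow> ('x::real_inner \<Rightarrow> real) \<Rightarrow> ('y \<Rightarrow> real)
   \<Rightarrow> real \<Rightarrow> real \<Rightarrow> real \<Rightarrow> 'x \<times> 'y \<Rightarrow> real" where
  "Rbar P smod scalib Rc Rs \<nu>1 \<nu>2 \<nu>3 cs =
     Rc (fst cs) + \<nu>1 * Rs (snd cs) + (\<nu>2/2) * (norm (snd cs - smod))\<^sup>2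
     + (\<nu>3/2) * (norm (P (snd cs) - scalib))\<^sup>2"

definition subdiff :: "('a::real_inner \<Rightarrow> real) \<Rightarrow> 'a \<Rightarrow> 'a set" where
  "subdiff R x = {\<xi>. \<forall>y. R y \<ge> R x + inner \<xi> (y - x)}"

definition bregman :: "('a::real_inner \<Rightarrow> real) \<Rightarrow> 'a \<Rightarrow> 'a \<Rightarrow> 'a \<Rightarrow> real" where
  "bregman R \<xi> x xstar = R x - R xstar - inner \<xi> (x - xstar)"

end

theory Submission
  imports Defs
begin

text \<open>With the forward map \<open>F (c, s) = B c s\<close>, the functional \<open>J\<close> with weights scaled by \<open>\<alpha>\<close> is
  the Tikhonov functional \<open>\<parallel>F x - u\<parallel>\<^sup>2/2 + \<alpha> \<bar>R x\<close>, and bilinearity plays no further role.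
  Comparing the regularized solution \<open>x\<close> with the exact solution \<open>x\<^sup>*\<close> gives
  \<open>\<parallel>F x - u\<parallel>\<^sup>2/2 + \<alpha> D \<le> \<delta>\<^sup>2/2 + \<alpha> \<langle>\<xi>, x\<^sup>* - x\<rangle>\<close> for the Bregman distance \<open>D\<close>; the same comparison
  places \<open>x\<close> in the sublevel set of the \<open>\<alpha>\<^sub>m\<^sub>a\<^sub>x\<close>-functional where the source condition holds.
  That condition bounds the inner product by \<open>\<kappa>\<^sub>1 D + \<kappa>\<^sub>2 \<parallel>F x - F x\<^sup>*\<parallel>\<close>, and
  \<open>\<parallel>F x - F x\<^sup>*\<parallel> \<le> \<parallel>F x - u\<parallel> + \<delta>\<close>. Solving the resulting quadratic inequality in \<open>\<parallel>F x - u\<parallel>\<close>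
  yields a residual of order \<open>\<alpha> + \<delta>\<close> and a Bregman distance of order \<open>\<delta>\<^sup>2/\<alpha> + \<alpha> + \<delta>\<close>,
  both \<open>O(\<delta>)\<close> when \<open>\<alpha> \<sim> \<delta>\<close>.\<close>

definition tikhonov :: "('a \<Rightarrow> 'z::real_normed_vector) \<Rightarrow> ('a \<Rightarrow> real) \<Rightarrow> 'z \<Rightarrow> real \<Rightarrow> 'a \<Rightarrow> real"
  where "tikhonov F R u \<alpha> x = (norm (F x - u))\<^sup>2 / 2 + \<alpha> * R x"

lemma Jfun_eq_tikhonov_Rbar:
  "Jfun B P smod scalib Rc Rs u \<alpha> (\<nu>1 * \<alpha>) (\<nu>2 * \<alpha>) (\<nu>3 * \<alpha>) c s
     = tikhonov (case_prod B) (Rbar P smod scalib Rc Rs \<nu>1 \<nu>2 \<nu>3) u \<alpha> (c, s)"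
  unfolding Jfun_def tikhonov_def Rbar_def by (simp add: algebra_simps)

lemma bregman_nonneg:
  assumes "\<xi> \<in> subdiff R x'"
  shows "0 \<le> bregman R \<xi> x x'"
proof -
  have "R x' + inner \<xi> (x - x') \<le> R x"
    using assms unfolding subdiff_def by blast
  then show ?thesis
    unfolding bregman_def by linarith
qed

lemma tikhonov_minimizer_le:
  assumes "\<forall>y. tikhonov F R u \<alpha> x \<le> tikhonov F R u \<alpha> y"
    and "norm (F x' - u) \<le> \<delta>"
  shows "tikhonov F R u \<alpha> x \<le> \<delta>\<^sup>2 / 2 + \<alpha> * R x'"
proof -
  have "(norm (F x' - u))\<^sup>2 \<le> \<delta>\<^sup>2"
    using assms(2) by (simp add: power_mono)
  then show ?thesis
    using spec[OF assms(1), of x'] unfolding tikhonov_def by linarith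
qed

lemma tikhonov_le_larger_parameter:
  assumes min_le: "tikhonov F R u \<alpha> x \<le> \<delta>\<^sup>2 / 2 + \<alpha> * R x'"
    and "0 < \<alpha>" "\<alpha> \<le> \<alpha>'"
  shows "tikhonov F R u \<alpha>' x \<le> \<alpha>' * (R x' + \<delta>\<^sup>2 / (2 * \<alpha>))"
proof -
  have "\<alpha> * R x \<le> \<delta>\<^sup>2 / 2 + \<alpha> * R x'"
    using min_le zero_le_power2[of "norm (F x - u)"] unfolding tikhonov_def by linarith
  then have R_le: "R x \<le> R x' + \<delta>\<^sup>2 / (2 * \<alpha>)"
    using \<open>0 < \<alpha>\<close> by (simp add: field_simps)
  have "tikhonov F R u \<alpha>' x = tikhonov F R u \<alpha> x + (\<alpha>' - \<alpha>) * R x"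
    unfolding tikhonov_def by (simp add: algebra_simps)
  also have "\<dots> \<le> \<delta>\<^sup>2 / 2 + \<alpha> * R x' + (\<alpha>' - \<alpha>) * (R x' + \<delta>\<^sup>2 / (2 * \<alpha>))"
    using min_le R_le \<open>\<alpha> \<le> \<alpha>'\<close> by (intro add_mono mult_left_mono) auto
  also have "\<dots> = \<alpha>' * (R x' + \<delta>\<^sup>2 / (2 * \<alpha>))"
    using \<open>0 < \<alpha>\<close> by (simp add: field_simps)
  finally show ?thesis .
qed

lemma quadratic_residual_bound:
  fixes r \<delta> \<alpha> D k1 k2 e :: real
  assumes "0 \<le> \<delta>" "0 < \<alpha>" "0 \<le> D" "k1 < 1" "0 \<le> k2"
    and e_le: "e \<le> r + \<delta>"
    and main: "r\<^sup>2 / 2 + \<alpha> * (1 - k1) * D \<le> \<delta>\<^sup>2 / 2 + \<alpha> * k2 * e"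
  shows "e \<le> 2 * \<alpha> * k2 + 2 * \<delta>"
    and "\<alpha> * (1 - k1) * D \<le> \<delta>\<^sup>2 / 2 + \<alpha> * k2 * (2 * \<alpha> * k2 + 2 * \<delta>)"
proof -
  have "0 \<le> \<alpha> * (1 - k1) * D"
    using assms by simp
  moreover have "\<alpha> * k2 * e \<le> \<alpha> * k2 * (r + \<delta>)"
    using assms by (simp add: mult_left_mono)
  ultimately have "r\<^sup>2 / 2 \<le> \<delta>\<^sup>2 / 2 + \<alpha> * k2 * (r + \<delta>)"
    using main by linarith
  then have "(r - \<alpha> * k2)\<^sup>2 \<le> (\<alpha> * k2 + \<delta>)\<^sup>2"
    by (simp add: power2_eq_square algebra_simps)
  then have "\<bar>r - \<alpha> * k2\<bar> \<le> \<bar>\<alpha> * k2 + \<delta>\<bar>"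
    using abs_le_square_iff by blast
  then show e_bound: "e \<le> 2 * \<alpha> * k2 + 2 * \<delta>"
    using assms by (simp add: abs_le_iff)
  have "\<alpha> * k2 * e \<le> \<alpha> * k2 * (2 * \<alpha> * k2 + 2 * \<delta>)"
    using e_bound assms by (simp add: mult_left_mono)
  then show "\<alpha> * (1 - k1) * D \<le> \<delta>\<^sup>2 / 2 + \<alpha> * k2 * (2 * \<alpha> * k2 + 2 * \<delta>)"
    using main zero_le_power2[of r] by linarith
qed

lemma tikhonov_error_estimate:
  fixes F :: "'a::real_inner \<Rightarrow> 'z::real_normed_vector"
  assumes min_le: "tikhonov F R u \<alpha> x \<le> \<delta>\<^sup>2 / 2 + \<alpha> * R x'"
    and noise: "norm (F x' - u) \<le> \<delta>"
    and source: "inner \<xi> (x' - x) \<le> \<kappa>1 * bregman R \<xi> x x' + \<kappa>2 * norm (F x - F x')"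
    and \<xi>: "\<xi> \<in> subdiff R x'"
    and "0 < \<alpha>" "\<kappa>1 < 1" "0 \<le> \<kappa>2"
  shows "norm (F x - F x') \<le> 2 * \<alpha> * \<kappa>2 + 2 * \<delta>"
    and "\<alpha> * (1 - \<kappa>1) * bregman R \<xi> x x' \<le> \<delta>\<^sup>2 / 2 + \<alpha> * \<kappa>2 * (2 * \<alpha> * \<kappa>2 + 2 * \<delta>)"
proof -
  have "\<alpha> * bregman R \<xi> x x' = \<alpha> * R x - \<alpha> * R x' + \<alpha> * inner \<xi> (x' - x)"
    unfolding bregman_def by (simp add: inner_diff_right algebra_simps)
  then have "(norm (F x - u))\<^sup>2 / 2 + \<alpha> * bregman R \<xi> x x' \<le> \<delta>\<^sup>2 / 2 + \<alpha> * inner \<xi> (x' - x)"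
    using min_le unfolding tikhonov_def by linarith
  also have "\<dots> \<le> \<delta>\<^sup>2 / 2 + \<alpha> * (\<kappa>1 * bregman R \<xi> x x' + \<kappa>2 * norm (F x - F x'))"
    using source \<open>0 < \<alpha>\<close> by (simp add: mult_left_mono)
  finally have main: "(norm (F x - u))\<^sup>2 / 2 + \<alpha> * (1 - \<kappa>1) * bregman R \<xi> x x'
      \<le> \<delta>\<^sup>2 / 2 + \<alpha> * \<kappa>2 * norm (F x - F x')"
    by (simp add: algebra_simps)
  have "norm (F x - F x') \<le> norm (F x - u) + norm (u - F x')"
    by (rule norm_diff_triangle_le[where y = u]) simp_all
  then have "norm (F x - F x') \<le> norm (F x - u) + \<delta>"
    using noise by (simp add: norm_minus_commute)
  moreover have "0 \<le> \<delta>"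
    using noise norm_ge_zero order_trans by blast
  ultimately show "norm (F x - F x') \<le> 2 * \<alpha> * \<kappa>2 + 2 * \<delta>"
    and "\<alpha> * (1 - \<kappa>1) * bregman R \<xi> x x' \<le> \<delta>\<^sup>2 / 2 + \<alpha> * \<kappa>2 * (2 * \<alpha> * \<kappa>2 + 2 * \<delta>)"
    using quadratic_residual_bound[OF _ \<open>0 < \<alpha>\<close> bregman_nonneg[OF \<xi>] \<open>\<kappa>1 < 1\<close> \<open>0 \<le> \<kappa>2\<close> _ main]
    by auto
qed

lemma tikhonov_linear_rate:
  fixes F :: "'a::real_inner \<Rightarrow> 'z::real_normed_vector"
  assumes min_le: "tikhonov F R u \<alpha> x \<le> \<delta>\<^sup>2 / 2 + \<alpha> * R x'"
    and noise: "norm (F x' - u) \<le> \<delta>"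
    and source: "inner \<xi> (x' - x) \<le> \<kappa>1 * bregman R \<xi> x x' + \<kappa>2 * norm (F x - F x')"
    and \<xi>: "\<xi> \<in> subdiff R x'"
    and \<kappa>: "\<kappa>1 < 1" "0 \<le> \<kappa>2"
    and \<alpha>: "0 < m" "0 < \<delta>" "m * \<delta> \<le> \<alpha>" "\<alpha> \<le> M' * \<delta>"
  shows "norm (F x - F x') \<le> (2 * M' * \<kappa>2 + 2) * \<delta>"
    and "bregman R \<xi> x x' \<le> (1 / (2 * m) + \<kappa>2 * (2 * M' * \<kappa>2 + 2)) / (1 - \<kappa>1) * \<delta>"
proof -
  have "0 < m * \<delta>"
    using \<alpha> by simp
  then have "0 < \<alpha>"
    using \<alpha> by linarith
  note est = tikhonov_error_estimate[OF min_le noise source \<xi> \<open>0 < \<alpha>\<close> \<kappa>]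
  have \<alpha>\<kappa>: "2 * \<alpha> * \<kappa>2 \<le> 2 * (M' * \<delta>) * \<kappa>2"
    using \<alpha> \<kappa> by (simp add: mult_right_mono)
  then show "norm (F x - F x') \<le> (2 * M' * \<kappa>2 + 2) * \<delta>"
    using est(1) by (simp add: algebra_simps)
  have "(1 - \<kappa>1) * bregman R \<xi> x x' \<le> \<delta>\<^sup>2 / (2 * \<alpha>) + \<kappa>2 * (2 * \<alpha> * \<kappa>2 + 2 * \<delta>)"
    using est(2) \<open>0 < \<alpha>\<close> by (simp add: field_simps)
  also have "\<dots> \<le> \<delta>\<^sup>2 / (2 * (m * \<delta>)) + \<kappa>2 * (2 * (M' * \<delta>) * \<kappa>2 + 2 * \<delta>)"
  proof (rule add_mono)
    show "\<delta>\<^sup>2 / (2 * \<alpha>) \<le> \<delta>\<^sup>2 / (2 * (m * \<delta>))"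
      using \<alpha> \<open>0 < \<alpha>\<close> by (intro divide_left_mono) auto
    show "\<kappa>2 * (2 * \<alpha> * \<kappa>2 + 2 * \<delta>) \<le> \<kappa>2 * (2 * (M' * \<delta>) * \<kappa>2 + 2 * \<delta>)"
      using \<alpha>\<kappa> \<kappa> by (simp add: mult_left_mono)
  qed
  also have "\<dots> = (1 / (2 * m) + \<kappa>2 * (2 * M' * \<kappa>2 + 2)) * \<delta>"
    using \<alpha> by (simp add: field_simps power2_eq_square)
  finally show "bregman R \<xi> x x' \<le> (1 / (2 * m) + \<kappa>2 * (2 * M' * \<kappa>2 + 2)) / (1 - \<kappa>1) * \<delta>"
    using \<kappa> by (simp add: field_simps)
qed

lemma bigo_at_right_0_linearI:
  fixes f :: "real \<Rightarrow> real"
  assumes "0 < \<delta>0" and bound: "\<And>\<delta>. 0 < \<delta> \<Longrightarrow> \<delta> < \<delta>0 \<Longrightarrow> \<bar>f \<delta>\<bar> \<le> K * \<delta>"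
  shows "f \<in> O[at_right 0](\<lambda>\<delta>. \<delta>)"
proof (rule bigoI[where c = K])
  have "eventually (\<lambda>\<delta>. 0 < \<delta> \<and> \<delta> < \<delta>0) (at_right (0::real))"
    using \<open>0 < \<delta>0\<close> by (auto simp: eventually_at_right_field)
  then show "eventually (\<lambda>\<delta>. norm (f \<delta>) \<le> K * norm \<delta>) (at_right 0)"
    by eventually_elim (use bound in auto)
qed

theorem mainTheorem5:
  fixes B :: "'x::{real_inner,complete_space} \<Rightarrow> 'y::{real_inner,complete_space} \<Rightarrow> 'z::{real_inner,complete_space}"
    and C :: real
    and Yn :: "'y set" and P :: "'y \<Rightarrow> 'y" and scalib smod :: 'y
    and Rc :: "'x \<Rightarrow> real" and Rs :: "'y \<Rightarrow> real"
    and \<nu>1 \<nu>2 \<nu>3 \<alpha>max :: real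
    and cstar :: 'x and sstar :: 'y
    and \<delta>0 m M' \<kappa>1 \<kappa>2 :: real
    and ud :: "real \<Rightarrow> 'z" and \<alpha> :: "real \<Rightarrow> real" and M :: "real \<Rightarrow> real"
    and ca :: "real \<Rightarrow> 'x" and sa :: "real \<Rightarrow> 'y"
    and \<xi>star :: "'x \<times> 'y"
  defines "RB \<equiv> Rbar P smod scalib Rc Rs \<nu>1 \<nu>2 \<nu>3"
  assumes B_bilinear: "bilinear B"
    and C_pos: "C > 0"
    and B_bound: "\<forall>c s. norm (B c s) \<le> C * norm c * norm s"
    and B_weak: "seq_weak_weak_cont B"
    and Yn: "fin_dim_subspace Yn"
    and P_lin: "bounded_linear P" and P_range: "\<forall>y. P y \<in> Yn"
    and scalib_in: "scalib \<in> Yn"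
    and Rc_nonneg: "\<forall>c. Rc c \<ge> 0" and Rc_convex: "convex_on UNIV Rc" and Rc_lsc: "weakly_lsc Rc"
    and Rs_nonneg: "\<forall>s. Rs s \<ge> 0" and Rs_convex: "convex_on UNIV Rs" and Rs_lsc: "weakly_lsc Rs"
    and nu_pos: "\<nu>1 > 0" "\<nu>2 > 0" "\<nu>3 > 0"
    and amax_pos: "\<alpha>max > 0"
    and Rmin: "\<forall>c s. B c s = B cstar sstar \<longrightarrow> RB (cstar, sstar) \<le> RB (c, s)"
    and \<delta>0_pos: "\<delta>0 > 0"
    and noise: "\<forall>\<delta>. 0 < \<delta> \<and> \<delta> < \<delta>0 \<longrightarrow> norm (B cstar sstar - ud \<delta>) \<le> \<delta>"
    and alpha_range: "\<forall>\<delta>. 0 < \<delta> \<and> \<delta> < \<delta>0 \<longrightarrow> 0 < \<alpha> \<delta> \<and> \<alpha> \<delta> \<le> \<alpha>max"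
    and alpha_sim: "0 < m" "m \<le> M'"
      "\<forall>\<delta>. 0 < \<delta> \<and> \<delta> < \<delta>0 \<longrightarrow> m * \<delta> \<le> \<alpha> \<delta> \<and> \<alpha> \<delta> \<le> M' * \<delta>"
    and minimizer: "\<forall>\<delta>. 0 < \<delta> \<and> \<delta> < \<delta>0 \<longrightarrow> (\<forall>c s.
        Jfun B P smod scalib Rc Rs (ud \<delta>) (\<alpha> \<delta>) (\<nu>1 * \<alpha> \<delta>) (\<nu>2 * \<alpha> \<delta>) (\<nu>3 * \<alpha> \<delta>) (ca \<delta>) (sa \<delta>)
        \<le> Jfun B P smod scalib Rc Rs (ud \<delta>) (\<alpha> \<delta>) (\<nu>1 * \<alpha> \<delta>) (\<nu>2 * \<alpha> \<delta>) (\<nu>3 * \<alpha> \<delta>) c s)"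
    and kappa: "0 \<le> \<kappa>1" "\<kappa>1 < 1" "0 \<le> \<kappa>2"
    and xi_subdiff: "\<xi>star \<in> subdiff RB (cstar, sstar)"
    and M_bound: "\<forall>\<delta>. 0 < \<delta> \<and> \<delta> < \<delta>0 \<longrightarrow> M \<delta> > \<alpha>max * (RB (cstar, sstar) + \<delta>\<^sup>2 / \<alpha> \<delta>)"
    and source: "\<forall>\<delta>. 0 < \<delta> \<and> \<delta> < \<delta>0 \<longrightarrow> (\<forall>c s.
        Jfun B P smod scalib Rc Rs (ud \<delta>) \<alpha>max (\<alpha>max * \<nu>1) (\<alpha>max * \<nu>2) (\<alpha>max * \<nu>3) c s \<le> M \<delta>
        \<longrightarrow> inner \<xi>star ((cstar, sstar) - (c, s))
            \<le> \<kappa>1 * bregman RB \<xi>star (c, s) (cstar, sstar) + \<kappa>2 * norm (B c s - B cstar sstar))"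
  shows "(\<lambda>\<delta>. bregman RB \<xi>star (ca \<delta>, sa \<delta>) (cstar, sstar)) \<in> O[at_right 0](\<lambda>\<delta>. \<delta>)
     \<and> (\<lambda>\<delta>. norm (B (ca \<delta>) (sa \<delta>) - B cstar sstar)) \<in> O[at_right 0](\<lambda>\<delta>. \<delta>)"
proof -
  let ?F = "case_prod B" and ?x = "(cstar, sstar)"
  have J: "Jfun B P smod scalib Rc Rs u a (\<nu>1 * a) (\<nu>2 * a) (\<nu>3 * a) c s = tikhonov ?F RB u a (c, s)"
    for u a c s
    unfolding RB_def by (rule Jfun_eq_tikhonov_Rbar)
  define K\<^sub>r where "K\<^sub>r = 2 * M' * \<kappa>2 + 2"
  define K\<^sub>D where "K\<^sub>D = (1 / (2 * m) + \<kappa>2 * (2 * M' * \<kappa>2 + 2)) / (1 - \<kappa>1)"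
  have rates: "norm (B (ca \<delta>) (sa \<delta>) - B cstar sstar) \<le> K\<^sub>r * \<delta>
      \<and> bregman RB \<xi>star (ca \<delta>, sa \<delta>) ?x \<le> K\<^sub>D * \<delta>"
    if \<delta>: "0 < \<delta>" "\<delta> < \<delta>0" for \<delta>
  proof -
    have "\<forall>y. tikhonov ?F RB (ud \<delta>) (\<alpha> \<delta>) (ca \<delta>, sa \<delta>) \<le> tikhonov ?F RB (ud \<delta>) (\<alpha> \<delta>) y"
      using minimizer \<delta> by (auto simp: J)
    moreover have noise\<delta>: "norm (?F ?x - ud \<delta>) \<le> \<delta>"
      using noise \<delta> by simp
    ultimately have min_le: "tikhonov ?F RB (ud \<delta>) (\<alpha> \<delta>) (ca \<delta>, sa \<delta>) \<le> \<delta>\<^sup>2 / 2 + \<alpha> \<delta> * RB ?x"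
      by (rule tikhonov_minimizer_le)
    have "tikhonov ?F RB (ud \<delta>) \<alpha>max (ca \<delta>, sa \<delta>) \<le> \<alpha>max * (RB ?x + \<delta>\<^sup>2 / (2 * \<alpha> \<delta>))"
      using min_le alpha_range \<delta> by (intro tikhonov_le_larger_parameter) auto
    also have "\<dots> \<le> \<alpha>max * (RB ?x + \<delta>\<^sup>2 / \<alpha> \<delta>)"
      using alpha_range amax_pos \<delta> by (intro mult_left_mono add_left_mono divide_left_mono) auto
    also have "\<dots> \<le> M \<delta>"
      using M_bound \<delta> by (simp add: less_imp_le)
    finally have "inner \<xi>star (?x - (ca \<delta>, sa \<delta>))
        \<le> \<kappa>1 * bregman RB \<xi>star (ca \<delta>, sa \<delta>) ?x + \<kappa>2 * norm (?F (ca \<delta>, sa \<delta>) - ?F ?x)"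
      using source \<delta> by (simp add: J[symmetric] mult.commute)
    from tikhonov_linear_rate[OF min_le noise\<delta> this xi_subdiff kappa(2,3) alpha_sim(1) \<delta>(1)] show ?thesis
      using alpha_sim(3) \<delta> unfolding K\<^sub>r_def K\<^sub>D_def by simp
  qed
  show ?thesis
  proof
    show "(\<lambda>\<delta>. bregman RB \<xi>star (ca \<delta>, sa \<delta>) ?x) \<in> O[at_right 0](\<lambda>\<delta>. \<delta>)"
      using rates bregman_nonneg[OF xi_subdiff] by (intro bigo_at_right_0_linearI[OF \<delta>0_pos, of _ K\<^sub>D]) force
    show "(\<lambda>\<delta>. norm (B (ca \<delta>) (sa \<delta>) - B cstar sstar)) \<in> O[at_right 0](\<lambda>\<delta>. \<delta>)"
      using rates by (intro bigo_at_right_0_linearI[OF \<delta>0_pos, of _ K\<^sub>r]) simp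
  qed
qed

end
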